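(* Let $n\in\mathbb{N}$, let $c=(c_{i,j})$ be an $n\times(n+1)$ matrix with entries in $\{0,1\}$, $\sigma_1,\ldots,\sigma_n>0$, $\gamma_1,\ldots,\gamma_{n+1}>0$, and $\gamma^\ast_{c,i}=\sum_jc_{i,j}\gamma_j$. Let $\mathbf{X}=(X_1,\ldots,X_n)'$ have decumulative distribution function $\mathbf{P}[X_1>x_1,\ldots,X_n>x_n]=\prod_{j=1}^{n+1}(1+\sum_{i=1}^nc_{i,j}x_i/\sigma_i)^{-\gamma_j}$ for $(x_1,\ldots,x_n)'\in(0,\infty)^n$. Then, for $i=1,\ldots,n$ and $q\in[0,1)$, whenever $CTE_q[X_i]$ exists, \[ CTE_q[X_i]=\mathbf{E}[X_i]\frac{\overline{F}_{X_i^\ast}(VaR_q[X_i])}{1-q}+VaR_q[X_i]=\mathbf{E}[X_i]+VaR_q[X_i]\frac{\gamma^\ast_{c,i}}{\gamma^\ast_{c,i}-1}, \] where $X_i^\ast\sim Pa(II)(\sigma_i,\gamma^\ast_{c,i}-1)$ with decumulative distribution function $\overline{F}_{X_i^\ast}$.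
   Context: $Pa(II)(\sigma,\alpha)$ has decumulative distribution function $(1+x/\sigma)^{-\alpha}$, $x>0$. $VaR_q[Y]=\inf\{x:\mathbf{P}[Y\le x]\ge q\}$ and $CTE_q[Y]=\mathbf{E}[Y\mid Y>VaR_q[Y]]$. *)

theory Defs
  imports "HOL-Probability.Probability"
begin

text \<open>Value-at-Risk of a (nonnegative) loss X at level q:
  VaR_q[X] = inf {x : P[X <= x] >= q}, the infimum taken over losses x >= 0
  (for q > 0 and X > 0 a.s. this is the usual quantile; for q = 0 it gives
  the left endpoint 0 of the support).\<close>
definition VaR :: "'a measure \<Rightarrow> ('a \<Rightarrow> real) \<Rightarrow> real \<Rightarrow> real" where
  "VaR M X q = Inf {x::real. 0 \<le> x \<and> q \<le> measure M {\<omega> \<in> space M. X \<omega> \<le> x}}"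

definition CTE :: "'a measure \<Rightarrow> ('a \<Rightarrow> real) \<Rightarrow> real \<Rightarrow> real" where
  "CTE M X q =
     (\<integral>\<omega>. X \<omega> * indicator {\<omega> \<in> space M. X \<omega> > VaR M X q} \<omega> \<partial>M)
     / measure M {\<omega> \<in> space M. X \<omega> > VaR M X q}"

definition pareto2_sf :: "real \<Rightarrow> real \<Rightarrow> real \<Rightarrow> real" where
  "pareto2_sf \<sigma> \<alpha> x = (if x > 0 then (1 + x / \<sigma>) powr (- \<alpha>) else 1)"

end

theory Submission
  imports Defs "HOL-Real_Asymp.Real_Asymp"
begin

text \<open>
  Letting all other coordinates of the joint survival function tend to \<open>0\<close> shows that
  \<open>X\<^sub>i\<close> is \<open>Pa(II)(\<sigma>\<^sub>i, \<alpha>)\<close> with \<open>\<alpha> = \<gamma>\<^sup>*\<^sub>c\<^sub>,\<^sub>i\<close>. Integrability of the tail forces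
  \<open>t P[X\<^sub>i > t] \<rightarrow> 0\<close>, hence \<open>\<alpha> > 1\<close>. For a \<open>Pa(II)(\<sigma>, \<alpha>)\<close> variable \<open>Y\<close> integrating
  \<open>y\<close> against the density gives \<open>E[Y; Y > a] = (1 + a/\<sigma>)\<^sup>-\<^sup>\<alpha> (\<sigma> + \<alpha> a)/(\<alpha> - 1)\<close>, and
  since \<open>P[Y > VaR\<^sub>q] = 1 - q\<close> this yields \<open>CTE\<^sub>q = (\<sigma> + \<alpha> VaR\<^sub>q)/(\<alpha> - 1)\<close>; both
  stated forms are rearrangements of this, using \<open>E[Y] = \<sigma>/(\<alpha> - 1)\<close>.
\<close>

lemma powr_neg_le_powr_neg_iff:
  fixes a x y :: real
  assumes "a < 0" "x > 0" "y > 0"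
  shows "x powr a \<le> y powr a \<longleftrightarrow> y \<le> x"
  using assms powr_less_mono2_neg[of a] powr_mono2'[of a] by (meson less_imp_le not_le)

lemma pareto2_sf_nonneg_arg: "x \<ge> 0 \<Longrightarrow> pareto2_sf \<sigma> \<alpha> x = (1 + x / \<sigma>) powr (- \<alpha>)"
  by (cases "x = 0") (auto simp: pareto2_sf_def)

lemma pareto2_sf_exponent_minus_one:
  assumes "\<sigma> > 0" "x \<ge> 0"
  shows "pareto2_sf \<sigma> (\<alpha> - 1) x = (1 + x / \<sigma>) * pareto2_sf \<sigma> \<alpha> x"
  using assms by (simp add: pareto2_sf_nonneg_arg powr_mult_base add_pos_nonneg)

definition pareto2_density :: "real \<Rightarrow> real \<Rightarrow> real \<Rightarrow> real" where
  "pareto2_density \<sigma> \<alpha> x = (if 0 \<le> x then \<alpha> / \<sigma> * (1 + x / \<sigma>) powr (- \<alpha> - 1) else 0)"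

lemma pareto2_density_measurable [measurable]: "pareto2_density \<sigma> \<alpha> \<in> borel_measurable borel"
  unfolding pareto2_density_def by measurable

lemma pareto2_density_nonneg: "\<sigma> > 0 \<Longrightarrow> \<alpha> > 0 \<Longrightarrow> pareto2_density \<sigma> \<alpha> x \<ge> 0"
  unfolding pareto2_density_def by auto

lemma has_real_derivative_neg_pareto2_sf:
  fixes \<sigma> \<alpha> y :: real
  assumes "\<sigma> > 0" "y \<ge> 0"
  shows "((\<lambda>y. - ((1 + y / \<sigma>) powr (- \<alpha>))) has_real_derivative pareto2_density \<sigma> \<alpha> y) (at y)"
proof -
  have "1 + y / \<sigma> > 0"
    using assms by (simp add: add_pos_nonneg)
  with assms show ?thesis
    by (auto intro!: derivative_eq_intros simp: pareto2_density_def)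
qed

lemma has_real_derivative_pareto2_tail_moment:
  fixes \<sigma> \<alpha> y :: real
  assumes "\<sigma> > 0" "y \<ge> 0"
  shows "((\<lambda>y. (1 + y / \<sigma>) powr (- \<alpha>) * (\<sigma> + \<alpha> * y))
     has_real_derivative (1 - \<alpha>) * (pareto2_density \<sigma> \<alpha> y * y)) (at y)"
proof -
  have base_pos: "(\<sigma> + y) / \<sigma> > 0"
    using assms by simp
  then have "((\<sigma> + y) / \<sigma>) powr (- \<alpha>) = (\<sigma> + y) / \<sigma> * ((\<sigma> + y) / \<sigma>) powr (- \<alpha> - 1)"
    by (subst powr_mult_base) auto
  with assms show ?thesis
    by (auto intro!: derivative_eq_intros simp: pareto2_density_def field_simps)
qed

lemma emeasure_pareto2_density_atMost:
  fixes \<sigma> \<alpha> x :: real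
  assumes "\<sigma> > 0" "\<alpha> > 0"
  shows "emeasure (density lborel (pareto2_density \<sigma> \<alpha>)) {..x} = ennreal (1 - pareto2_sf \<sigma> \<alpha> x)"
proof (cases "x \<ge> 0")
  case True
  have "emeasure (density lborel (pareto2_density \<sigma> \<alpha>)) {..x}
      = (\<integral>\<^sup>+y. ennreal (pareto2_density \<sigma> \<alpha> y) * indicator {0..x} y \<partial>lborel)"
    by (auto simp: emeasure_density pareto2_density_def intro!: nn_integral_cong split: split_indicator)
  also have "\<dots> = ennreal (- ((1 + x / \<sigma>) powr (- \<alpha>)) - - ((1 + 0 / \<sigma>) powr (- \<alpha>)))"
    using assms True
    by (intro nn_integral_FTC_Icc has_real_derivative_neg_pareto2_sf pareto2_density_nonneg) auto
  finally show ?thesis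
    using True by (simp add: pareto2_sf_nonneg_arg)
next
  case False
  then show ?thesis
    by (auto simp: emeasure_density pareto2_density_def pareto2_sf_def nn_integral_0_iff_AE
        split: split_indicator)
qed

lemma prob_space_pareto2_density:
  fixes \<sigma> \<alpha> :: real
  assumes "\<sigma> > 0" "\<alpha> > 0"
  shows "prob_space (density lborel (pareto2_density \<sigma> \<alpha>))"
proof (rule prob_spaceI)
  have "emeasure (density lborel (pareto2_density \<sigma> \<alpha>)) UNIV
      = (\<integral>\<^sup>+y. ennreal (pareto2_density \<sigma> \<alpha> y) * indicator {0..} y \<partial>lborel)"
    by (auto simp: emeasure_density pareto2_density_def intro!: nn_integral_cong split: split_indicator)
  also have "\<dots> = ennreal (0 - - ((1 + 0 / \<sigma>) powr (- \<alpha>)))"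
  proof (rule nn_integral_FTC_atLeast)
    show "((\<lambda>y. - ((1 + y / \<sigma>) powr (- \<alpha>))) \<longlongrightarrow> 0) at_top"
      using assms by real_asymp
  qed (use assms in \<open>auto intro!: has_real_derivative_neg_pareto2_sf pareto2_density_nonneg\<close>)
  finally show "emeasure (density lborel (pareto2_density \<sigma> \<alpha>))
      (space (density lborel (pareto2_density \<sigma> \<alpha>))) = 1"
    by simp
qed

lemma (in finite_measure) tendsto_mult_measure_greater:
  fixes Y :: "'a \<Rightarrow> real"
  assumes [measurable]: "Y \<in> borel_measurable M"
    and integrable: "integrable M (\<lambda>\<omega>. Y \<omega> * indicator {\<omega> \<in> space M. Y \<omega> > a} \<omega>)"
  shows "((\<lambda>t. t * measure M {\<omega> \<in> space M. Y \<omega> > t}) \<longlongrightarrow> 0) at_top"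
proof -
  define tail where "tail t \<omega> = Y \<omega> * indicator {\<omega> \<in> space M. Y \<omega> > t} \<omega>" for t \<omega>
  have [measurable]: "tail t \<in> borel_measurable M" for t
    unfolding tail_def by measurable
  have "((\<lambda>t. integral\<^sup>L M (tail t)) \<longlongrightarrow> integral\<^sup>L M (\<lambda>_. 0)) at_top"
  proof (rule integral_dominated_convergence_at_top[where w="\<lambda>\<omega>. \<bar>tail a \<omega>\<bar>"])
    show "AE \<omega> in M. ((\<lambda>t. tail t \<omega>) \<longlongrightarrow> 0) at_top"
    proof (intro AE_I2 tendsto_eventually)
      fix \<omega>
      show "\<forall>\<^sub>F t in at_top. tail t \<omega> = 0"
        using eventually_ge_at_top[of "Y \<omega>"] by eventually_elim (auto simp: tail_def)
    qed
    show "\<forall>\<^sub>F t in at_top. AE \<omega> in M. norm (tail t \<omega>) \<le> \<bar>tail a \<omega>\<bar>"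
      using eventually_ge_at_top[of a]
      by eventually_elim (auto simp: tail_def split: split_indicator)
  qed (use integrable in \<open>auto simp: tail_def\<close>)
  then have tail_to_0: "((\<lambda>t. integral\<^sup>L M (tail t)) \<longlongrightarrow> 0) at_top"
    by simp
  have "\<forall>\<^sub>F t in at_top. 0 \<le> t * measure M {\<omega> \<in> space M. Y \<omega> > t}"
    using eventually_ge_at_top[of 0] by eventually_elim simp
  moreover have "\<forall>\<^sub>F t in at_top. t * measure M {\<omega> \<in> space M. Y \<omega> > t} \<le> integral\<^sup>L M (tail t)"
    using eventually_ge_at_top[of "max a 0"]
  proof eventually_elim
    case (elim t)
    have "integrable M (tail t)"
      by (rule Bochner_Integration.integrable_bound[OF integrable])
        (use elim in \<open>auto simp: tail_def split: split_indicator intro!: AE_I2\<close>)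
    then have "(\<integral>\<omega>. t * indicator {\<omega> \<in> space M. Y \<omega> > t} \<omega> \<partial>M) \<le> integral\<^sup>L M (tail t)"
      by (intro integral_mono)
        (auto simp: tail_def less_top[symmetric] intro!: integrable_real_indicator split: split_indicator)
    then show ?case
      by simp
  qed
  ultimately show ?thesis
    by (intro tendsto_sandwich[OF _ _ tendsto_const tail_to_0])
qed

locale pareto2_variable = prob_space M for M :: "'a measure" +
  fixes Y :: "'a \<Rightarrow> real" and \<sigma> \<alpha> :: real
  assumes measurable_Y [measurable]: "Y \<in> borel_measurable M"
    and scale_pos: "\<sigma> > 0"
    and prob_greater: "\<And>x. x > 0 \<Longrightarrow> prob {\<omega> \<in> space M. Y \<omega> > x} = (1 + x / \<sigma>) powr (- \<alpha>)"
begin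

lemma prob_le_pos:
  assumes "x > 0"
  shows "prob {\<omega> \<in> space M. Y \<omega> \<le> x} = 1 - (1 + x / \<sigma>) powr (- \<alpha>)"
proof -
  have "{\<omega> \<in> space M. Y \<omega> \<le> x} = space M - {\<omega> \<in> space M. Y \<omega> > x}"
    by auto
  then show ?thesis
    using prob_compl[of "{\<omega> \<in> space M. Y \<omega> > x}"] prob_greater[OF assms] by simp
qed

lemma prob_le_zero: "prob {\<omega> \<in> space M. Y \<omega> \<le> 0} = 0"
proof -
  have "prob {\<omega> \<in> space M. Y \<omega> \<le> 0} \<le> 1 - (1 + 0 / \<sigma>) powr (- \<alpha>)"
  proof (rule tendsto_lowerbound)
    show "((\<lambda>x. 1 - (1 + x / \<sigma>) powr (- \<alpha>)) \<longlongrightarrow> 1 - (1 + 0 / \<sigma>) powr (- \<alpha>)) (at_right 0)"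
      using scale_pos by (intro tendsto_intros) auto
    show "\<forall>\<^sub>F x in at_right 0. prob {\<omega> \<in> space M. Y \<omega> \<le> 0} \<le> 1 - (1 + x / \<sigma>) powr (- \<alpha>)"
      using eventually_at_right_less[of "0::real"]
    proof eventually_elim
      case (elim x)
      then have "prob {\<omega> \<in> space M. Y \<omega> \<le> 0} \<le> prob {\<omega> \<in> space M. Y \<omega> \<le> x}"
        by (intro finite_measure_mono) auto
      then show ?case
        using prob_le_pos[OF elim] by simp
    qed
  qed simp
  then show ?thesis
    using measure_nonneg[of M] by (simp add: order_antisym)
qed

lemma AE_pos: "AE \<omega> in M. Y \<omega> > 0"
  using prob_le_zero by (subst AE_iff_measurable[where N = "{\<omega> \<in> space M. Y \<omega> \<le> 0}"])
    (auto simp: emeasure_eq_measure)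

lemma prob_le_eq_pareto2_sf: "prob {\<omega> \<in> space M. Y \<omega> \<le> x} = 1 - pareto2_sf \<sigma> \<alpha> x"
proof (cases "x > 0")
  case False
  then have "prob {\<omega> \<in> space M. Y \<omega> \<le> x} \<le> prob {\<omega> \<in> space M. Y \<omega> \<le> 0}"
    by (intro finite_measure_mono) auto
  with False show ?thesis
    using prob_le_zero measure_nonneg[of M] by (simp add: pareto2_sf_def order_antisym)
qed (simp add: prob_le_pos pareto2_sf_def)

lemma prob_greater_eq_pareto2_sf: "prob {\<omega> \<in> space M. Y \<omega> > x} = pareto2_sf \<sigma> \<alpha> x"
proof -
  have "{\<omega> \<in> space M. Y \<omega> > x} = space M - {\<omega> \<in> space M. Y \<omega> \<le> x}"
    by auto
  then show ?thesis
    using prob_compl[of "{\<omega> \<in> space M. Y \<omega> \<le> x}"] prob_le_eq_pareto2_sf[of x] by simp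
qed

lemma exponent_gt_one_if_tail_integrable:
  assumes "integrable M (\<lambda>\<omega>. Y \<omega> * indicator {\<omega> \<in> space M. Y \<omega> > a} \<omega>)"
  shows "\<alpha> > 1"
proof (rule ccontr)
  assume "\<not> \<alpha> > 1"
  have "\<forall>\<^sub>F t in at_top. \<sigma> / 2 \<le> t * prob {\<omega> \<in> space M. Y \<omega> > t}"
    using eventually_ge_at_top[of \<sigma>]
  proof eventually_elim
    case (elim t)
    with scale_pos have t: "t > 0"
      by simp
    have "\<sigma> / (\<sigma> + t) = (1 + t / \<sigma>) powr (- 1)"
      using scale_pos t by (simp add: powr_minus field_simps)
    also have "\<dots> \<le> (1 + t / \<sigma>) powr (- \<alpha>)"
      using \<open>\<not> \<alpha> > 1\<close> scale_pos t by (intro powr_mono) auto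
    finally have "t * (\<sigma> / (\<sigma> + t)) \<le> t * prob {\<omega> \<in> space M. Y \<omega> > t}"
      using prob_greater[OF t] t by (intro mult_left_mono) auto
    moreover have "\<sigma> / 2 \<le> t * (\<sigma> / (\<sigma> + t))"
      using scale_pos elim by (simp add: field_simps)
    ultimately show ?case
      by linarith
  qed
  then have "\<sigma> / 2 \<le> 0"
    by (rule tendsto_lowerbound[OF tendsto_mult_measure_greater[OF measurable_Y assms]]) simp
  with scale_pos show False
    by simp
qed

lemma VaR_eq:
  assumes "\<alpha> > 0" "0 \<le> q" "q < 1"
  shows "VaR M Y q = \<sigma> * ((1 - q) powr (- 1 / \<alpha>) - 1)"
proof -
  define v where "v = \<sigma> * ((1 - q) powr (- 1 / \<alpha>) - 1)"
  have base_v: "1 + v / \<sigma> = (1 - q) powr (- 1 / \<alpha>)"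
    using scale_pos by (simp add: v_def)
  have "1 powr (- 1 / \<alpha>) \<le> (1 - q) powr (- 1 / \<alpha>)"
    using assms by (intro powr_mono2') auto
  then have v_nonneg: "v \<ge> 0"
    using scale_pos by (simp add: v_def)
  have "q \<le> prob {\<omega> \<in> space M. Y \<omega> \<le> x} \<longleftrightarrow> v \<le> x" if "x \<ge> 0" for x
  proof -
    have "q \<le> prob {\<omega> \<in> space M. Y \<omega> \<le> x} \<longleftrightarrow> (1 + x / \<sigma>) powr (- \<alpha>) \<le> (1 + v / \<sigma>) powr (- \<alpha>)"
      using assms that prob_le_eq_pareto2_sf[of x]
      by (auto simp: base_v powr_powr pareto2_sf_nonneg_arg)
    also have "\<dots> \<longleftrightarrow> v \<le> x"
      using assms that v_nonneg scale_pos
      by (subst powr_neg_le_powr_neg_iff) (auto simp: add_pos_nonneg divide_le_cancel)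
    finally show ?thesis .
  qed
  then have "{x. 0 \<le> x \<and> q \<le> prob {\<omega> \<in> space M. Y \<omega> \<le> x}} = {v..}"
    using v_nonneg by auto
  then show ?thesis
    by (simp add: VaR_def v_def)
qed

lemma VaR_nonneg: "\<alpha> > 0 \<Longrightarrow> 0 \<le> q \<Longrightarrow> q < 1 \<Longrightarrow> VaR M Y q \<ge> 0"
  using VaR_eq scale_pos powr_mono2'[of "- 1 / \<alpha>" "1 - q" 1] by simp

lemma pareto2_sf_VaR:
  assumes "\<alpha> > 0" "0 \<le> q" "q < 1"
  shows "pareto2_sf \<sigma> \<alpha> (VaR M Y q) = 1 - q"
proof -
  have "1 + VaR M Y q / \<sigma> = (1 - q) powr (- 1 / \<alpha>)"
    using VaR_eq[OF assms] scale_pos by simp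
  then show ?thesis
    using assms by (simp add: pareto2_sf_nonneg_arg VaR_nonneg powr_powr)
qed

lemma distr_eq_pareto2_density:
  assumes "\<alpha> > 0"
  shows "distr M borel Y = density lborel (pareto2_density \<sigma> \<alpha>)"
proof (rule cdf_unique)
  show "real_distribution (distr M borel Y)"
    by (rule real_distribution_distr) simp
  show "real_distribution (density lborel (pareto2_density \<sigma> \<alpha>))"
    using prob_space_pareto2_density[OF scale_pos assms]
    by (simp add: real_distribution_def real_distribution_axioms_def)
  show "cdf (distr M borel Y) = cdf (density lborel (pareto2_density \<sigma> \<alpha>))"
  proof
    fix x :: real
    have "cdf (distr M borel Y) x = prob {\<omega> \<in> space M. Y \<omega> \<le> x}"
      unfolding cdf_def by (subst measure_distr) (auto intro!: arg_cong[where f = prob])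
    also have "\<dots> = 1 - pareto2_sf \<sigma> \<alpha> x"
      by (rule prob_le_eq_pareto2_sf)
    also have "\<dots> = measure (density lborel (pareto2_density \<sigma> \<alpha>)) {..x}"
      using emeasure_pareto2_density_atMost[OF scale_pos assms, of x]
        prob_le_eq_pareto2_sf[of x] measure_nonneg[of M]
      by (metis enn2real_ennreal measure_def)
    finally show "cdf (distr M borel Y) x = cdf (density lborel (pareto2_density \<sigma> \<alpha>)) x"
      by (simp add: cdf_def)
  qed
qed

lemma nn_integral_tail:
  assumes "\<alpha> > 1" "a \<ge> 0"
  shows "(\<integral>\<^sup>+\<omega>. ennreal (Y \<omega> * indicator {\<omega> \<in> space M. Y \<omega> > a} \<omega>) \<partial>M)
       = ennreal ((1 + a / \<sigma>) powr (- \<alpha>) * (\<sigma> + \<alpha> * a) / (\<alpha> - 1))"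
proof -
  let ?F = "\<lambda>y. (1 + y / \<sigma>) powr (- \<alpha>) * (\<sigma> + \<alpha> * y) / (1 - \<alpha>)"
  have "(\<integral>\<^sup>+\<omega>. ennreal (Y \<omega> * indicator {\<omega> \<in> space M. Y \<omega> > a} \<omega>) \<partial>M)
      = (\<integral>\<^sup>+y. ennreal (y * indicator {a<..} y) \<partial>distr M borel Y)"
    by (subst nn_integral_distr) (auto intro!: nn_integral_cong split: split_indicator)
  also have "\<dots> = (\<integral>\<^sup>+y. ennreal (pareto2_density \<sigma> \<alpha> y) * ennreal (y * indicator {a<..} y) \<partial>lborel)"
    using assms by (simp add: distr_eq_pareto2_density nn_integral_density)
  also have "\<dots> = (\<integral>\<^sup>+y. ennreal (pareto2_density \<sigma> \<alpha> y * y) * indicator {a..} y \<partial>lborel)"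
    using AE_lborel_singleton[of a]
    by (intro nn_integral_cong_AE, eventually_elim)
      (use assms scale_pos in \<open>auto simp: ennreal_mult[symmetric] pareto2_density_def split: split_indicator\<close>)
  also have "\<dots> = ennreal (0 - ?F a)"
  proof (rule nn_integral_FTC_atLeast)
    show "(?F has_real_derivative pareto2_density \<sigma> \<alpha> y * y) (at y)" if "a \<le> y" for y
      using has_real_derivative_pareto2_tail_moment[OF scale_pos, of y \<alpha>] assms that
      by (auto intro!: DERIV_cdivide[where c = "1 - \<alpha>", THEN DERIV_cong])
    show "(?F \<longlongrightarrow> 0) at_top"
      using assms scale_pos by real_asymp
  qed (use assms scale_pos in \<open>auto simp: pareto2_density_def\<close>)
  finally show ?thesis
    using assms by (simp add: minus_divide_right)
qed

lemma integral_tail: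
  assumes "\<alpha> > 1" "a \<ge> 0"
  shows "(\<integral>\<omega>. Y \<omega> * indicator {\<omega> \<in> space M. Y \<omega> > a} \<omega> \<partial>M)
       = (1 + a / \<sigma>) powr (- \<alpha>) * (\<sigma> + \<alpha> * a) / (\<alpha> - 1)"
  using assms scale_pos
  by (intro has_bochner_integral_integral_eq has_bochner_integral_nn_integral nn_integral_tail)
    (auto split: split_indicator)

lemma expectation_eq:
  assumes "\<alpha> > 1"
  shows "expectation Y = \<sigma> / (\<alpha> - 1)"
proof -
  have "expectation Y = (\<integral>\<omega>. Y \<omega> * indicator {\<omega> \<in> space M. Y \<omega> > 0} \<omega> \<partial>M)"
    using AE_pos by (intro integral_cong_AE) (auto split: split_indicator)
  then show ?thesis
    using integral_tail[OF assms order_refl] by simp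
qed

lemma CTE_eq:
  assumes "\<alpha> > 1" "0 \<le> q" "q < 1"
  shows "CTE M Y q = (\<sigma> + \<alpha> * VaR M Y q) / (\<alpha> - 1)"
proof -
  let ?v = "VaR M Y q"
  have "?v \<ge> 0" "pareto2_sf \<sigma> \<alpha> ?v = 1 - q"
    using assms VaR_nonneg pareto2_sf_VaR by auto
  then show ?thesis
    using assms prob_greater_eq_pareto2_sf[of ?v]
    by (simp add: CTE_def integral_tail pareto2_sf_nonneg_arg)
qed

lemma CTE_representations:
  assumes "0 \<le> q" "q < 1"
    and "integrable M (\<lambda>\<omega>. Y \<omega> * indicator {\<omega> \<in> space M. Y \<omega> > VaR M Y q} \<omega>)"
  shows "CTE M Y q = expectation Y * pareto2_sf \<sigma> (\<alpha> - 1) (VaR M Y q) / (1 - q) + VaR M Y q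
      \<and> CTE M Y q = expectation Y + VaR M Y q * \<alpha> / (\<alpha> - 1)"
proof -
  let ?v = "VaR M Y q"
  have "\<alpha> > 1"
    using assms(3) by (rule exponent_gt_one_if_tail_integrable)
  then have "pareto2_sf \<sigma> (\<alpha> - 1) ?v = (1 + ?v / \<sigma>) * (1 - q)"
    using assms scale_pos VaR_nonneg pareto2_sf_VaR pareto2_sf_exponent_minus_one by auto
  then have "expectation Y * pareto2_sf \<sigma> (\<alpha> - 1) ?v / (1 - q) + ?v = \<sigma> / (\<alpha> - 1) * (1 + ?v / \<sigma>) + ?v"
    using \<open>\<alpha> > 1\<close> assms by (simp add: expectation_eq)
  also have "\<dots> = (\<sigma> + \<alpha> * ?v) / (\<alpha> - 1)"
    using \<open>\<alpha> > 1\<close> scale_pos by (simp add: field_simps)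
  moreover have "expectation Y + ?v * \<alpha> / (\<alpha> - 1) = (\<sigma> + \<alpha> * ?v) / (\<alpha> - 1)"
    using \<open>\<alpha> > 1\<close> by (simp add: expectation_eq add_divide_distrib mult.commute)
  ultimately show ?thesis
    using CTE_eq[OF \<open>\<alpha> > 1\<close> assms(1,2)] by simp
qed

end

lemma (in prob_space) prob_greater_from_joint_survival:
  fixes X :: "'i \<Rightarrow> 'a \<Rightarrow> real" and F :: "('i \<Rightarrow> real) \<Rightarrow> real"
  assumes "countable I" "i \<in> I"
    and measurable: "\<And>k. k \<in> I \<Longrightarrow> X k \<in> borel_measurable M"
    and joint: "\<And>y. (\<forall>k\<in>I. y k > 0) \<Longrightarrow> prob {\<omega> \<in> space M. \<forall>k\<in>I. X k \<omega> > y k} = F y"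
    and "x > 0"
    and F_lim_x: "((\<lambda>\<epsilon>. F (\<lambda>k. if k = i then x else \<epsilon>)) \<longlongrightarrow> F (\<lambda>k. if k = i then x else 0)) (at_right 0)"
    and F_lim_0: "((\<lambda>\<epsilon>. F (\<lambda>_. \<epsilon>)) \<longlongrightarrow> 1) (at_right 0)"
  shows "prob {\<omega> \<in> space M. X i \<omega> > x} = F (\<lambda>k. if k = i then x else 0)"
proof -
  define A where "A \<epsilon> = {\<omega> \<in> space M. \<forall>k\<in>I. X k \<omega> > (if k = i then x else \<epsilon>)}" for \<epsilon>
  define B where "B \<epsilon> = {\<omega> \<in> space M. \<forall>k\<in>I. X k \<omega> > \<epsilon>}" for \<epsilon>
  have greater_sets: "{\<omega> \<in> space M. X k \<omega> > t} \<in> sets M" if "k \<in> I" for k t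
    using measurable[OF that] by measurable
  have [measurable]: "A \<epsilon> \<in> sets M" "B \<epsilon> \<in> sets M" for \<epsilon>
    unfolding A_def B_def
    by (intro sets.sets_Collect_countable_All' greater_sets \<open>countable I\<close>; assumption)+
  let ?p = "prob {\<omega> \<in> space M. X i \<omega> > x}"
  have "F (\<lambda>k. if k = i then x else 0) \<le> ?p"
  proof (rule tendsto_upperbound[OF F_lim_x])
    show "\<forall>\<^sub>F \<epsilon> in at_right 0. F (\<lambda>k. if k = i then x else \<epsilon>) \<le> ?p"
      using eventually_at_right_less[of "0::real"]
    proof eventually_elim
      case (elim \<epsilon>)
      have "A \<epsilon> \<subseteq> {\<omega> \<in> space M. X i \<omega> > x}"
        using \<open>i \<in> I\<close> by (force simp: A_def)
      then have "prob (A \<epsilon>) \<le> ?p"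
        using greater_sets[OF \<open>i \<in> I\<close>] by (intro finite_measure_mono)
      then show ?case
        using joint[of "\<lambda>k. if k = i then x else \<epsilon>"] elim \<open>x > 0\<close> by (simp add: A_def)
    qed
  qed simp
  moreover have "?p \<le> F (\<lambda>k. if k = i then x else 0) + 1 - 1"
  proof (rule tendsto_lowerbound[OF tendsto_diff[OF tendsto_add[OF F_lim_x tendsto_const] F_lim_0]])
    show "\<forall>\<^sub>F \<epsilon> in at_right 0. ?p \<le> F (\<lambda>k. if k = i then x else \<epsilon>) + 1 - F (\<lambda>_. \<epsilon>)"
      using eventually_at_right_less[of "0::real"]
    proof eventually_elim
      case (elim \<epsilon>)
      have "{\<omega> \<in> space M. X i \<omega> > x} \<subseteq> A \<epsilon> \<union> (space M - B \<epsilon>)"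
        by (auto simp: A_def B_def)
      then have "?p \<le> prob (A \<epsilon> \<union> (space M - B \<epsilon>))"
        by (intro finite_measure_mono) auto
      also have "\<dots> \<le> prob (A \<epsilon>) + prob (space M - B \<epsilon>)"
        by (intro measure_subadditive) auto
      also have "\<dots> = prob (A \<epsilon>) + 1 - prob (B \<epsilon>)"
        by (simp add: prob_compl)
      finally show ?case
        using joint[of "\<lambda>k. if k = i then x else \<epsilon>"] joint[of "\<lambda>_. \<epsilon>"] elim \<open>x > 0\<close>
        by (simp add: A_def B_def)
    qed
  qed simp
  ultimately show ?thesis
    by simp
qed

definition mpareto2_sf ::
    "nat \<Rightarrow> (nat \<Rightarrow> nat \<Rightarrow> real) \<Rightarrow> (nat \<Rightarrow> real) \<Rightarrow> (nat \<Rightarrow> real) \<Rightarrow> (nat \<Rightarrow> real) \<Rightarrow> real" where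
  "mpareto2_sf n c \<sigma> \<gamma> x = (\<Prod>j=1..n+1. (1 + (\<Sum>i=1..n. c i j * x i / \<sigma> i)) powr (- \<gamma> j))"

lemma tendsto_mpareto2_sf:
  assumes lim: "\<And>i. i \<in> {1..n} \<Longrightarrow> ((\<lambda>t. f i t) \<longlongrightarrow> x i) F"
    and x_nonneg: "\<And>i. i \<in> {1..n} \<Longrightarrow> x i \<ge> 0"
    and c_nonneg: "\<And>i j. i \<in> {1..n} \<Longrightarrow> j \<in> {1..n+1} \<Longrightarrow> c i j \<ge> 0"
    and \<sigma>_pos: "\<And>i. i \<in> {1..n} \<Longrightarrow> \<sigma> i > 0"
  shows "((\<lambda>t. mpareto2_sf n c \<sigma> \<gamma> (\<lambda>i. f i t)) \<longlongrightarrow> mpareto2_sf n c \<sigma> \<gamma> x) F"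
  unfolding mpareto2_sf_def
proof (intro tendsto_prod tendsto_powr tendsto_add tendsto_sum tendsto_divide tendsto_mult
    tendsto_const lim)
  show "1 + (\<Sum>i=1..n. c i j * x i / \<sigma> i) \<noteq> 0" if "j \<in> {1..n+1}" for j
    using x_nonneg c_nonneg[OF _ that] \<sigma>_pos
    by (smt (verit, best) divide_nonneg_pos mult_nonneg_nonneg sum_nonneg)
qed (use \<sigma>_pos in force)+

lemma mpareto2_sf_single:
  assumes "i \<in> {1..n}" "x \<ge> 0" "\<sigma> i > 0"
    and c01: "\<forall>j\<in>{1..n+1}. c i j \<in> {0, 1}"
  shows "mpareto2_sf n c \<sigma> \<gamma> (\<lambda>k. if k = i then x else 0)
       = (1 + x / \<sigma> i) powr (- (\<Sum>j=1..n+1. c i j * \<gamma> j))"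
proof -
  have base_pos: "1 + x / \<sigma> i > 0"
    using assms by (simp add: add_pos_nonneg)
  have "(1 + (\<Sum>k=1..n. c k j * (if k = i then x else 0) / \<sigma> k)) powr (- \<gamma> j)
      = (1 + x / \<sigma> i) powr (- (c i j * \<gamma> j))" if "j \<in> {1..n+1}" for j
  proof -
    have "(\<Sum>k=1..n. c k j * (if k = i then x else 0) / \<sigma> k) = c i j * x / \<sigma> i"
      using \<open>i \<in> {1..n}\<close>
      by (simp add: if_distrib[of "\<lambda>y. c _ j * y / \<sigma> _"] sum.delta cong: if_cong)
    moreover have "c i j = 0 \<or> c i j = 1"
      using c01 that by auto
    ultimately show ?thesis
      using base_pos by auto
  qed
  then have "mpareto2_sf n c \<sigma> \<gamma> (\<lambda>k. if k = i then x else 0)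
      = (\<Prod>j=1..n+1. (1 + x / \<sigma> i) powr (- (c i j * \<gamma> j)))"
    unfolding mpareto2_sf_def by (intro prod.cong) auto
  also have "\<dots> = (1 + x / \<sigma> i) powr (- (\<Sum>j=1..n+1. c i j * \<gamma> j))"
    using base_pos by (subst powr_sum[symmetric]) (auto simp: sum_negf)
  finally show ?thesis .
qed

lemma (in prob_space) prob_greater_mpareto2_marginal:
  assumes c01: "\<forall>i\<in>{1..n}. \<forall>j\<in>{1..n+1}. c i j \<in> {0, 1}"
    and \<sigma>_pos: "\<forall>i\<in>{1..n}. \<sigma> i > 0"
    and measurable: "\<forall>i\<in>{1..n}. X i \<in> borel_measurable M"
    and joint: "\<And>y. (\<forall>k\<in>{1..n}. y k > 0) \<Longrightarrow>
      prob {\<omega> \<in> space M. \<forall>k\<in>{1..n}. X k \<omega> > y k} = mpareto2_sf n c \<sigma> \<gamma> y"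
    and "i \<in> {1..n}" "x > 0"
  shows "prob {\<omega> \<in> space M. X i \<omega> > x} = (1 + x / \<sigma> i) powr (- (\<Sum>j=1..n+1. c i j * \<gamma> j))"
proof -
  have c_nonneg: "\<And>k j. k \<in> {1..n} \<Longrightarrow> j \<in> {1..n+1} \<Longrightarrow> c k j \<ge> 0"
    using c01 by fastforce
  have "prob {\<omega> \<in> space M. X i \<omega> > x} = mpareto2_sf n c \<sigma> \<gamma> (\<lambda>k. if k = i then x else 0)"
  proof (rule prob_greater_from_joint_survival[where I = "{1..n}"])
    show "((\<lambda>\<epsilon>. mpareto2_sf n c \<sigma> \<gamma> (\<lambda>k. if k = i then x else \<epsilon>))
        \<longlongrightarrow> mpareto2_sf n c \<sigma> \<gamma> (\<lambda>k. if k = i then x else 0)) (at_right 0)"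
      using \<sigma>_pos c_nonneg \<open>x > 0\<close> by (intro tendsto_mpareto2_sf) auto
    show "((\<lambda>\<epsilon>. mpareto2_sf n c \<sigma> \<gamma> (\<lambda>_. \<epsilon>)) \<longlongrightarrow> 1) (at_right 0)"
      using tendsto_mpareto2_sf[of n "\<lambda>_ \<epsilon>. \<epsilon>" "\<lambda>_. 0" "at_right 0" c \<sigma> \<gamma>] \<sigma>_pos c_nonneg
      by (simp add: mpareto2_sf_def)
  qed (use joint measurable assms in auto)
  then show ?thesis
    using mpareto2_sf_single c01 \<sigma>_pos assms by simp
qed

theorem corollary4p3:
  fixes M :: "'a measure" and n :: nat
    and c :: "nat \<Rightarrow> nat \<Rightarrow> real"
    and \<sigma> \<gamma> :: "nat \<Rightarrow> real"
    and X :: "nat \<Rightarrow> 'a \<Rightarrow> real"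
    and i :: nat and q :: real
  assumes "prob_space M"
    and c01: "\<forall>i\<in>{1..n}. \<forall>j\<in>{1..n+1}. c i j \<in> {0, 1}"
    and \<sigma>pos: "\<forall>i\<in>{1..n}. \<sigma> i > 0"
    and \<gamma>pos: "\<forall>j\<in>{1..n+1}. \<gamma> j > 0"
    and meas: "\<forall>i\<in>{1..n}. X i \<in> borel_measurable M"
    and dist: "\<forall>x::nat \<Rightarrow> real. (\<forall>i\<in>{1..n}. x i > 0) \<longrightarrow>
        measure M {\<omega> \<in> space M. \<forall>i\<in>{1..n}. X i \<omega> > x i}
        = (\<Prod>j=1..n+1. (1 + (\<Sum>i=1..n. c i j * x i / \<sigma> i)) powr (- \<gamma> j))"
    and i: "i \<in> {1..n}"
    and q: "0 \<le> q" "q < 1"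
    and CTE_exists: "integrable M (\<lambda>\<omega>. X i \<omega> * indicator {\<omega> \<in> space M. X i \<omega> > VaR M (X i) q} \<omega>)"
  shows "CTE M (X i) q
           = (\<integral>\<omega>. X i \<omega> \<partial>M)
               * pareto2_sf (\<sigma> i) ((\<Sum>j=1..n+1. c i j * \<gamma> j) - 1) (VaR M (X i) q) / (1 - q)
             + VaR M (X i) q
       \<and> CTE M (X i) q
           = (\<integral>\<omega>. X i \<omega> \<partial>M)
             + VaR M (X i) q * (\<Sum>j=1..n+1. c i j * \<gamma> j) / ((\<Sum>j=1..n+1. c i j * \<gamma> j) - 1)"
proof -
  interpret prob_space M by fact
  have "prob {\<omega> \<in> space M. X i \<omega> > x} = (1 + x / \<sigma> i) powr (- (\<Sum>j=1..n+1. c i j * \<gamma> j))"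
    if "x > 0" for x
    using c01 \<sigma>pos meas dist i that
    by (intro prob_greater_mpareto2_marginal) (auto simp: mpareto2_sf_def)
  then interpret pareto2_variable M "X i" "\<sigma> i" "\<Sum>j=1..n+1. c i j * \<gamma> j"
    using meas \<sigma>pos i by unfold_locales auto
  show ?thesis
    using CTE_representations[OF q CTE_exists] by simp
qed

end
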